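(* Let $d\ge2$. Every $\sigma_d$-rotational set $A\subset\mathbb{T}$ is a union of at most $d-1$ distinct $\sigma_d$-orbits.
   Context: $\mathbb{T}=\mathbb{R}/\mathbb{Z}$, ordered by representatives in $[0,1)$; $\sigma_d(t)=dt$. A finite set $A=\{t_0<\dots<t_{N-1}\}\subset\mathbb{T}$ (indices in $\mathbb{Z}/N\mathbb{Z}$) is $\sigma_d$-rotational if for some fixed $0\ne P\in\mathbb{Z}/N\mathbb{Z}$, $\sigma_d(t_i)=t_{i+P}$ for all $i$. *)

theory Defs
  imports "HOL-Analysis.Analysis"
begin

text \<open>The circle T = R/Z is represented by representatives in [0,1), ordered as reals.\<close>

definition sigma :: "nat \<Rightarrow> real \<Rightarrow> real" where
  "sigma d t = frac (real d * t)"

definition rotational :: "nat \<Rightarrow> real set \<Rightarrow> bool" where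
  "rotational d A \<longleftrightarrow> finite A \<and> A \<subseteq> {0..<1} \<and>
     (let N = card A; t = (\<lambda>i. sorted_list_of_set A ! i) in
      \<exists>P::nat. P mod N \<noteq> 0 \<and> (\<forall>i<N. sigma d (t i) = t ((i + P) mod N)))"

definition orbit :: "nat \<Rightarrow> real \<Rightarrow> real set" where
  "orbit d t = {(sigma d ^^ n) t | n. True}"

end

theory Submission
  imports Defs
begin

text \<open>Write \<open>A = {t\<^sub>0 < \<dots> < t\<^sub>N\<^sub>-\<^sub>1}\<close> and let \<open>l\<^sub>i > 0\<close> be the length of the arc
  from \<open>t\<^sub>i\<close> to \<open>t\<^sub>i\<^sub>+\<^sub>1\<close> (indices mod \<open>N\<close>), so \<open>\<Sum> l\<^sub>i = 1\<close>. As \<open>\<sigma>\<^sub>d\<close> sends the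
  endpoints of the \<open>i\<close>-th arc to those of the \<open>(i+P)\<close>-th, it winds the former onto the latter
  some extra number of times: \<open>d l\<^sub>i = l\<^sub>i\<^sub>+\<^sub>P + k\<^sub>i\<close> with \<open>k\<^sub>i\<close> a nonnegative integer, and
  summing gives \<open>\<Sum> k\<^sub>i = d - 1\<close>. The \<open>\<sigma>\<^sub>d\<close>-orbits in \<open>A\<close> correspond to the cycles of
  \<open>i \<mapsto> i + P\<close>, and at an index \<open>i\<close> of a longest arc of a cycle \<open>l\<^sub>i\<^sub>+\<^sub>P \<le> l\<^sub>i < d l\<^sub>i\<close>,
  so \<open>k\<^sub>i \<ge> 1\<close>. Hence there are at most \<open>d - 1\<close> orbits.\<close>

definition forward_orbit :: "('a \<Rightarrow> 'a) \<Rightarrow> 'a \<Rightarrow> 'a set" where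
  "forward_orbit f x = range (\<lambda>n. (f ^^ n) x)"

lemma orbit_eq_forward_orbit: "orbit d = forward_orbit (sigma d)"
  by (auto simp: fun_eq_iff orbit_def forward_orbit_def)

lemma funpow_add_apply: "(f ^^ (m + n)) x = (f ^^ m) ((f ^^ n) x)"
  by (simp add: funpow_add)

lemma funpow_in_forward_orbit [simp]: "(f ^^ n) x \<in> forward_orbit f x"
  by (simp add: forward_orbit_def)

lemma self_in_forward_orbit [simp]: "x \<in> forward_orbit f x"
  using funpow_in_forward_orbit[of 0 f x] by simp

lemma forward_orbit_mono: "y \<in> forward_orbit f x \<Longrightarrow> forward_orbit f y \<subseteq> forward_orbit f x"
  by (auto simp: forward_orbit_def simp flip: funpow_add_apply)

lemma funpow_in_set: "f ` A \<subseteq> A \<Longrightarrow> x \<in> A \<Longrightarrow> (f ^^ n) x \<in> A"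
  by (induction n) auto

lemma forward_orbit_subset: "f ` A \<subseteq> A \<Longrightarrow> x \<in> A \<Longrightarrow> forward_orbit f x \<subseteq> A"
  by (auto simp: forward_orbit_def funpow_in_set)

lemma Union_forward_orbit: "f ` A \<subseteq> A \<Longrightarrow> \<Union> (forward_orbit f ` A) = A"
  using forward_orbit_subset[of f A] by auto

lemma forward_orbit_semiconj:
  assumes "f ` I \<subseteq> I" and "\<And>i. i \<in> I \<Longrightarrow> g (t i) = t (f i)" and "i \<in> I"
  shows "forward_orbit g (t i) = t ` forward_orbit f i"
proof -
  have "(g ^^ n) (t i) = t ((f ^^ n) i)" for n
    by (induction n) (simp_all add: assms(2) funpow_in_set[OF assms(1,3)])
  then show ?thesis
    by (simp add: forward_orbit_def image_image)
qed

lemma funpow_periodic: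
  assumes "finite A" and "bij_betw f A A" and "x \<in> A"
  obtains p where "p > 0" and "(f ^^ p) x = x"
proof -
  have maps: "f ` A \<subseteq> A"
    using assms(2) bij_betw_imp_surj_on by blast
  have "\<not> inj (\<lambda>n. (f ^^ n) x)"
  proof
    assume "inj (\<lambda>n. (f ^^ n) x)"
    moreover have "range (\<lambda>n. (f ^^ n) x) \<subseteq> A"
      using funpow_in_set[OF maps assms(3)] by blast
    ultimately have "finite (UNIV :: nat set)"
      using assms(1) finite_subset finite_imageD by metis
    then show False
      by simp
  qed
  then obtain a b where "a \<noteq> b" and "(f ^^ a) x = (f ^^ b) x"
    unfolding inj_def by blast
  then obtain a b where ab: "a < b" "(f ^^ a) x = (f ^^ b) x"
    by (metis linorder_neqE_nat)
  have "(f ^^ a) ((f ^^ (b - a)) x) = (f ^^ a) x"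
    using ab by (simp flip: funpow_add_apply)
  moreover have "inj_on (f ^^ a) A"
    using bij_betw_funpow[OF assms(2)] bij_betw_imp_inj_on by blast
  ultimately have "(f ^^ (b - a)) x = x"
    using funpow_in_set[OF maps assms(3)] assms(3) inj_onD by metis
  then show ?thesis
    using that[of "b - a"] ab(1) by simp
qed

lemma forward_orbit_eq:
  assumes "finite A" and "bij_betw f A A" and "x \<in> A" and "y \<in> forward_orbit f x"
  shows "forward_orbit f y = forward_orbit f x"
proof
  show "forward_orbit f y \<subseteq> forward_orbit f x"
    using assms(4) by (rule forward_orbit_mono)
  obtain m where y: "y = (f ^^ m) x"
    using assms(4) by (auto simp: forward_orbit_def)
  obtain p where "p > 0" and "(f ^^ p) x = x"
    using funpow_periodic[OF assms(1-3)] .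
  then have "(f ^^ (m * p)) x = x"
    by (induction m) (simp_all add: funpow_add_apply)
  moreover have "m * p = (m * p - m) + m"
    using \<open>p > 0\<close> by simp
  ultimately have "x = (f ^^ (m * p - m)) y"
    by (metis y funpow_add_apply)
  then have "x \<in> forward_orbit f y"
    using funpow_in_forward_orbit by simp
  then show "forward_orbit f x \<subseteq> forward_orbit f y"
    by (rule forward_orbit_mono)
qed

text \<open>On each cycle, \<open>l\<close> does not increase at a point where it is maximal.\<close>
lemma card_forward_orbits_le:
  fixes l :: "'a \<Rightarrow> 'b::linorder"
  assumes "finite A" and "bij_betw f A A"
  shows "card (forward_orbit f ` A) \<le> card {x \<in> A. l (f x) \<le> l x}"
proof -
  have maps: "f ` A \<subseteq> A"
    using assms(2) bij_betw_imp_surj_on by blast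
  have "forward_orbit f x \<in> forward_orbit f ` {x \<in> A. l (f x) \<le> l x}" if "x \<in> A" for x
  proof -
    let ?O = "forward_orbit f x"
    have "finite ?O"
      using forward_orbit_subset[OF maps that] assms(1) finite_subset by blast
    moreover have "?O \<noteq> {}"
      using self_in_forward_orbit[of x f] by blast
    ultimately have "Max (l ` ?O) \<in> l ` ?O"
      by simp
    then obtain y where y: "y \<in> ?O" and "l y = Max (l ` ?O)"
      by (metis imageE)
    with \<open>finite ?O\<close> have ymax: "\<And>z. z \<in> ?O \<Longrightarrow> l z \<le> l y"
      by simp
    have "f y \<in> ?O"
      using forward_orbit_mono[OF y] funpow_in_forward_orbit[of 1 f y] by auto
    then have "l (f y) \<le> l y"
      by (rule ymax)
    moreover have "y \<in> A"
      using forward_orbit_subset[OF maps that] y by blast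
    ultimately show ?thesis
      using forward_orbit_eq[OF assms that y] by blast
  qed
  then have "card (forward_orbit f ` A) \<le> card (forward_orbit f ` {x \<in> A. l (f x) \<le> l x})"
    using assms(1) by (intro card_mono) auto
  also have "\<dots> \<le> card {x \<in> A. l (f x) \<le> l x}"
    using assms(1) by (intro card_image_le) simp
  finally show ?thesis .
qed

lemma bij_betw_add_mod: "0 < N \<Longrightarrow> bij_betw (\<lambda>i. (i + c) mod N) {..<N} {..<(N::nat)}"
proof -
  assume "0 < N"
  have "inj_on (\<lambda>i. (i + c) mod N) {..<N}"
  proof (rule inj_onI)
    fix i j assume "i \<in> {..<N}" "j \<in> {..<N}" and eq: "(i + c) mod N = (j + c) mod N"
    have "i mod N = j mod N"
      using eq nat_mod_eq_iff by fastforce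
    with \<open>i \<in> {..<N}\<close> \<open>j \<in> {..<N}\<close> show "i = j"
      by simp
  qed
  moreover have "(\<lambda>i. (i + c) mod N) ` {..<N} \<subseteq> {..<N}"
    using \<open>0 < N\<close> by auto
  ultimately show ?thesis
    by (simp add: bij_betw_def endo_inj_surj)
qed

lemma sum_add_mod: "(\<Sum>i<N. g ((i + c) mod N)) = (\<Sum>i<(N::nat). g i)"
proof (cases "N = 0")
  case False
  then show ?thesis
    using sum.reindex_bij_betw[OF bij_betw_add_mod] by blast
qed simp

text \<open>The last arc wraps around through 0, hence the added 1.\<close>
definition gap :: "(nat \<Rightarrow> real) \<Rightarrow> nat \<Rightarrow> nat \<Rightarrow> real" where
  "gap t N i = t (Suc i mod N) - t i + (if Suc i = N then 1 else 0)"

lemma sum_gap: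
  assumes "0 < N"
  shows "(\<Sum>i<N. gap t N i) = 1"
proof -
  have "(\<Sum>i<N. t (Suc i mod N)) = (\<Sum>i<N. t i)"
    using sum_add_mod[of t 1 N] by simp
  moreover have "(\<Sum>i<N. if Suc i = N then 1 else 0 :: real) = (\<Sum>i<N. if i = N - 1 then 1 else 0)"
    using assms by (intro sum.cong) auto
  moreover have "\<dots> = 1"
    using assms by simp
  ultimately show ?thesis
    by (simp add: gap_def sum.distrib sum_subtractf)
qed

lemma gap_bounds:
  assumes "strict_mono_on {..<N} t" and "t ` {..<N} \<subseteq> {0..<1}" and "i < N"
  shows "0 < gap t N i" and "gap t N i \<le> 1"
proof -
  have t01: "0 \<le> t j" "t j < 1" if "j < N" for j
    using assms(2) that by auto
  have "0 < gap t N i \<and> gap t N i \<le> 1"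
  proof (cases "Suc i = N")
    case True
    have "t 0 \<le> t i"
      using assms(1,3) by (cases "i = 0") (auto simp: strict_mono_on_def less_imp_le)
    with True t01[of 0] t01[of i] assms(3) show ?thesis
      by (simp add: gap_def)
  next
    case False
    then have "Suc i < N"
      using assms(3) by simp
    then have "t i < t (Suc i)"
      using assms(1) by (simp add: strict_mono_on_def)
    with False \<open>Suc i < N\<close> t01[of i] t01[of "Suc i"] show ?thesis
      by (simp add: gap_def)
  qed
  then show "0 < gap t N i" and "gap t N i \<le> 1"
    by simp_all
qed

lemma gap_rotation_Ints:
  assumes rot: "\<And>j. j < N \<Longrightarrow> frac (real d * t j) = t ((j + P) mod N)" and "i < N"
  shows "real d * gap t N i - gap t N ((i + P) mod N) \<in> \<int>"
proof -
  define e where "e j = real d * t j - t ((j + P) mod N)" for j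
  have e: "e j \<in> \<int>" if "j < N" for j
    using rot[OF that, symmetric] by (simp add: e_def frac_def)
  define c where "c j = (if Suc j = N then 1 else 0 :: real)" for j
  define s where "s = Suc i mod N"
  define p where "p = (i + P) mod N"
  have "s < N"
    using assms(2) by (simp add: s_def)
  have "(s + P) mod N = Suc p mod N"
    by (simp add: s_def p_def mod_add_left_eq mod_Suc_eq)
  then have gap_p: "gap t N p = t ((s + P) mod N) - t p + c p"
    by (simp add: gap_def c_def)
  have gap_i: "gap t N i = t s - t i + c i"
    by (simp add: gap_def c_def s_def)
  have e_i: "e i = real d * t i - t p"
    by (simp add: e_def p_def)
  have "real d * gap t N i - gap t N p = e s - e i + (real d * c i - c p)"
    by (simp add: gap_i gap_p e_i e_def[of s] algebra_simps)
  also have "\<dots> \<in> \<int>"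
    using e[OF \<open>s < N\<close>] e[OF assms(2)] by (intro Ints_add Ints_diff) (auto simp: c_def)
  finally show ?thesis
    by (simp add: p_def)
qed

lemma card_nonzero_le_sum_Ints:
  assumes "finite I" and "\<And>i. i \<in> I \<Longrightarrow> k i \<in> \<int>" and "\<And>i. i \<in> I \<Longrightarrow> 0 \<le> k i"
  shows "real (card {i \<in> I. k i \<noteq> 0}) \<le> (\<Sum>i\<in>I. k i)"
proof -
  have "real (card {i \<in> I. k i \<noteq> 0}) = (\<Sum>i\<in>{i \<in> I. k i \<noteq> 0}. 1)"
    by simp
  also have "\<dots> \<le> (\<Sum>i\<in>{i \<in> I. k i \<noteq> 0}. k i)"
    using assms(2,3) Ints_nonzero_abs_ge1 by (intro sum_mono) fastforce
  also have "\<dots> \<le> (\<Sum>i\<in>I. k i)"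
    using assms(1,3) by (intro sum_mono2) auto
  finally show ?thesis .
qed

lemma card_shift_orbits_le:
  fixes d N P :: nat and t :: "nat \<Rightarrow> real"
  assumes "2 \<le> d" and "strict_mono_on {..<N} t" and "t ` {..<N} \<subseteq> {0..<1}"
    and rot: "\<And>i. i < N \<Longrightarrow> frac (real d * t i) = t ((i + P) mod N)"
  shows "card (forward_orbit (\<lambda>i. (i + P) mod N) ` {..<N}) \<le> d - 1"
proof (cases "N = 0")
  case False
  define f where "f = (\<lambda>i. (i + P) mod N)"
  define k where "k i = real d * gap t N i - gap t N (f i)" for i
  have f: "f i < N" for i
    using False by (simp add: f_def)
  have k_Ints: "k i \<in> \<int>" if "i < N" for i
    using gap_rotation_Ints[of N d t P, OF rot that] by (simp add: k_def f_def)
  have k_nonneg: "0 \<le> k i" if i: "i < N" for i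
  proof -
    have "0 < real d * gap t N i"
      using gap_bounds(1)[OF assms(2,3) i] assms(1) by simp
    moreover have "gap t N (f i) \<le> 1"
      using gap_bounds(2)[OF assms(2,3) f] .
    ultimately have "-1 < k i"
      by (simp add: k_def)
    moreover obtain z where "k i = of_int z"
      using k_Ints[OF i] by (auto elim: Ints_cases)
    ultimately show ?thesis
      by simp
  qed
  have "card (forward_orbit f ` {..<N}) \<le> card {i \<in> {..<N}. gap t N (f i) \<le> gap t N i}"
    using bij_betw_add_mod False by (intro card_forward_orbits_le) (auto simp: f_def)
  also have "\<dots> \<le> card {i \<in> {..<N}. k i \<noteq> 0}"
  proof (intro card_mono)
    have "gap t N i < real d * gap t N i" if "i < N" for i
      using mult_strict_right_mono[of 1 "real d", OF _ gap_bounds(1)[OF assms(2,3) that]] assms(1)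
      by simp
    then show "{i \<in> {..<N}. gap t N (f i) \<le> gap t N i} \<subseteq> {i \<in> {..<N}. k i \<noteq> 0}"
      by (auto simp: k_def) (metis not_le)
  qed simp
  finally have "real (card (forward_orbit f ` {..<N})) \<le> (\<Sum>i<N. k i)"
    using card_nonzero_le_sum_Ints[of "{..<N}" k] k_Ints k_nonneg by fastforce
  also have "\<dots> = real d - 1"
    using sum_gap[of N t] sum_add_mod[of "gap t N" P N] False
    by (simp add: k_def f_def sum_subtractf sum_distrib_left[symmetric])
  finally show ?thesis
    using assms(1) unfolding f_def by linarith
qed simp

lemma rotational_indexing:
  assumes "rotational d A"
  obtains t :: "nat \<Rightarrow> real" and N P :: nat
  where "A = t ` {..<N}" and "strict_mono_on {..<N} t" and "t ` {..<N} \<subseteq> {0..<1}"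
    and "\<And>i. i < N \<Longrightarrow> sigma d (t i) = t ((i + P) mod N)"
proof -
  define N where "N = card A"
  define t where "t = (\<lambda>i. sorted_list_of_set A ! i)"
  have "finite A" and "A \<subseteq> {0..<1}"
    using assms by (simp_all add: rotational_def)
  have "A = set (sorted_list_of_set A)"
    using \<open>finite A\<close> by simp
  also have "\<dots> = t ` {..<N}"
    unfolding t_def N_def set_conv_nth by auto
  finally have A: "A = t ` {..<N}" .
  have mono: "strict_mono_on {..<N} t"
    unfolding strict_mono_on_def t_def N_def
    by (metis lessThan_iff length_sorted_list_of_set sorted_wrt_nth_less strict_sorted_list_of_set)
  have "\<exists>P. \<forall>i<N. sigma d (t i) = t ((i + P) mod N)"
    using assms unfolding rotational_def Let_def N_def t_def by blast
  then obtain P where "\<And>i. i < N \<Longrightarrow> sigma d (t i) = t ((i + P) mod N)"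
    by auto
  moreover have "t ` {..<N} \<subseteq> {0..<1}"
    using A \<open>A \<subseteq> {0..<1}\<close> by simp
  ultimately show ?thesis
    by (intro that[OF A mono])
qed

theorem corollary3p5:
  fixes d :: nat and A :: "real set"
  assumes "d \<ge> 2" and "rotational d A"
  shows "A = \<Union> (orbit d ` A) \<and> card (orbit d ` A) \<le> d - 1"
proof -
  obtain t :: "nat \<Rightarrow> real" and N P :: nat
    where A: "A = t ` {..<N}" and mono: "strict_mono_on {..<N} t" and A01: "t ` {..<N} \<subseteq> {0..<1}"
      and rot: "\<And>i. i < N \<Longrightarrow> sigma d (t i) = t ((i + P) mod N)"
    using rotational_indexing[OF assms(2)] by metis
  define f where "f = (\<lambda>i. (i + P) mod N)"
  have f: "f ` {..<N} \<subseteq> {..<N}"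
    by (auto simp: f_def)
  have orbit_t: "orbit d (t i) = t ` forward_orbit f i" if "i < N" for i
    unfolding orbit_eq_forward_orbit using that rot
    by (intro forward_orbit_semiconj[OF f]) (auto simp: f_def)
  have "sigma d ` A \<subseteq> A"
    using A rot f by (auto simp: f_def)
  then have "A = \<Union> (orbit d ` A)"
    by (simp add: orbit_eq_forward_orbit Union_forward_orbit)
  moreover have "card (orbit d ` A) \<le> d - 1"
  proof -
    have "orbit d ` A = image t ` forward_orbit f ` {..<N}"
      using A orbit_t by (auto simp: image_image)
    then have "card (orbit d ` A) \<le> card (forward_orbit f ` {..<N})"
      by (simp add: card_image_le)
    also have "\<dots> \<le> d - 1"
      using card_shift_orbits_le[OF assms(1) mono A01] rot by (simp add: f_def sigma_def)
    finally show ?thesis .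
  qed
  ultimately show ?thesis ..
qed

end
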